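(* Let $N\ge1$ and $b\ge1$ be integers, let $\Delta\ge 1$ and $K\ge 1$ be reals, and suppose $b\le\log_2(N/(K\Delta))$. Then there is a set $\mathcal{Y}\subset(\{0,1\}^b)^N$ of entropy deficiency at most $\Delta$ and min-entropy rate more than $1-1/b$ such that for every $I\subseteq[N]$ with $|I|\le (K-1)\Delta$, the set $\mathrm{IP}_b^{[N]\setminus I}((\{0,1\}^b)^N,\mathcal{Y})$ does not contain the all-$1$ string.
   Context: The Inner-Product function $\mathrm{IP}_b:\{0,1\}^b\times\{0,1\}^b\to\{0,1\}$ is $\mathrm{IP}_b(x,y)=\sum_j x_jy_j \bmod 2$. For $\mathcal{A},\mathcal{B}\subseteq(\{0,1\}^b)^N$ and $J\subseteq[N]$, $\mathrm{IP}_b^J(\mathcal{A},\mathcal{B})\subseteq\{0,1\}^J$ is the set of vectors $(\mathrm{IP}_b(x_i,y_i))_{i\in J}$ with $x\in\mathcal{A}$, $y\in\mathcal{B}$. A set is identified with the uniform distribution on it. The entropy deficiency of a set $\mathcal{Y}\subseteq(\{0,1\}^b)^N$ is $bN-\log_2|\mathcal{Y}|$. The min-entropy rate of a distribution $\mathcal{D}$ on $U^N$ is the largest $\tau$ such that for every $J\subseteq[N]$ and $\alpha_J\in U^J$, $\Pr_{x\sim\mathcal{D}}[x_J=\alpha_J]\le|U|^{-\tau|J|}$ (here $|U|=2^b$). *)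

theory Defs
  imports Complex_Main "HOL-Library.FuncSet"
begin

text \<open>Elements of \<open>{0,1}^b\<close> are boolean lists of length b; elements of
  \<open>({0,1}^b)^N\<close> are lists of N such blocks; coordinates are indexed by \<open>{..<N}\<close>.\<close>

definition blocks :: "nat \<Rightarrow> nat \<Rightarrow> bool list list set" where
  "blocks b N = {xs. length xs = N \<and> (\<forall>v\<in>set xs. length v = b)}"

definition IP :: "nat \<Rightarrow> bool list \<Rightarrow> bool list \<Rightarrow> nat" where
  "IP b x y = (\<Sum>j<b. (if x ! j \<and> y ! j then 1 else 0)) mod 2"

text \<open>\<open>IP_b^J(A,B)\<close>: vectors indexed by J (extended by undefined outside J).\<close>
definition IP_set :: "nat \<Rightarrow> nat set \<Rightarrow> bool list list set \<Rightarrow> bool list list set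
    \<Rightarrow> (nat \<Rightarrow> nat) set" where
  "IP_set b J A B = {restrict (\<lambda>i. IP b (x ! i) (y ! i)) J | x y. x \<in> A \<and> y \<in> B}"

definition entropy_deficiency :: "nat \<Rightarrow> nat \<Rightarrow> bool list list set \<Rightarrow> real" where
  "entropy_deficiency b N Y = real b * real N - log 2 (real (card Y))"

definition prob_agree :: "bool list list set \<Rightarrow> nat set \<Rightarrow> (nat \<Rightarrow> bool list) \<Rightarrow> real" where
  "prob_agree Y J \<alpha> = real (card {x \<in> Y. \<forall>i\<in>J. x ! i = \<alpha> i}) / real (card Y)"

definition min_entropy_rate :: "nat \<Rightarrow> nat \<Rightarrow> bool list list set \<Rightarrow> real" where
  "min_entropy_rate b N Y = Sup {\<tau>. \<forall>J \<subseteq> {..<N}. \<forall>\<alpha> :: nat \<Rightarrow> bool list.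
      prob_agree Y J \<alpha> \<le> (2 ^ b) powr (- \<tau> * real (card J))}"

end

theory Submission
  imports Defs
begin

text \<open>Let \<open>Y\<close> consist of the strings with at least \<open>t = \<lfloor>(K - 1)\<Delta>\<rfloor> + 1\<close> all-zero
  blocks. The number of zero blocks of a uniformly random string is binomial with mean
  \<open>N / 2^b \<ge> K\<Delta> \<ge> t\<close>, and already \<open>t\<close> is below its median: writing
  \<open>a\<^sub>j = C(n, j) c^(n - j)\<close> with \<open>c = 2^b - 1\<close>, the ratio recurrence of the \<open>a\<^sub>j\<close> gives
  \<open>a\<^bsub>m-1-k\<^esub> < a\<^bsub>m+k\<^esub>\<close> whenever \<open>(c + 1) m \<le> n\<close>, so the lower tail is dominated
  term by term by its mirror image. Hence \<open>|Y| > 2^(bN) / 2\<close>, i.e. the entropy deficiency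
  \<open>d\<close> of \<open>Y\<close> is below 1. Fixing \<open>|J| \<ge> 1\<close> blocks leaves at most \<open>2^(b(N - |J|))\<close>
  strings, so the probability is at most \<open>2^(d - b|J|) \<le> 2^(-b|J|(1 - d/b))\<close> and the
  min-entropy rate is at least \<open>1 - d/b > 1 - 1/b\<close>. Finally a zero block \<open>y\<^sub>i\<close> forces
  \<open>IP(x\<^sub>i, y\<^sub>i) = 0\<close>, and every \<open>y \<in> Y\<close> has a zero block outside any \<open>I\<close> with
  \<open>|I| < t\<close>.\<close>

lemma twice_le_of_scaled_le:
  fixes c :: real and m n :: nat
  assumes "c \<ge> 1" and "(c + 1) * m \<le> n"
  shows "2 * m \<le> n"
proof -
  have "2 * real m \<le> (c + 1) * m" using assms(1) by (intro mult_right_mono) auto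
  then show ?thesis using assms(2) by linarith
qed

lemma mirrored_product_le:
  fixes c m n i :: real
  assumes "c \<ge> 1" and "(c + 1) * m \<le> n" and "0 \<le> i" and "i \<le> m"
  shows "c\<^sup>2 * ((m - i) * (m + i)) \<le> (n - m + 1 + i) * (n - m + 1 - i)"
proof -
  have "c * m \<le> n - m + 1" using assms(2) by (simp add: algebra_simps)
  then have "(c * m)\<^sup>2 \<le> (n - m + 1)\<^sup>2"
    using assms by (intro power_mono) auto
  moreover have "i\<^sup>2 \<le> c\<^sup>2 * i\<^sup>2"
    using assms(1) by (simp add: mult_le_cancel_right1)
  ultimately show ?thesis by (simp add: power2_eq_square algebra_simps)
qed

lemma mirrored_terms_less:
  fixes a :: "nat \<Rightarrow> real" and c :: real and m n k :: nat
  assumes c: "c \<ge> 1" and pos: "\<And>j. j \<le> n \<Longrightarrow> a j > 0"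
    and rec: "\<And>j. j < n \<Longrightarrow> a (Suc j) * Suc j * c = a j * (n - j)"
    and mn: "(c + 1) * m \<le> n"
  shows "k < m \<Longrightarrow> a (m - 1 - k) < a (m + k)"
proof (induction k)
  case 0
  have "2 * m \<le> n" using twice_le_of_scaled_le[OF c mn] .
  have "a m * (m * c) = a (m - 1) * (n - (m - 1))"
    using rec[of "m - 1"] 0 \<open>2 * m \<le> n\<close> by (simp add: mult.assoc)
  moreover have "m * c < n - (m - 1)"
    using mn 0 \<open>2 * m \<le> n\<close> by (simp add: of_nat_diff algebra_simps)
  moreover have "a m > 0" using pos \<open>2 * m \<le> n\<close> by simp
  ultimately have "a (m - 1) * (n - (m - 1)) < a m * (n - (m - 1))"
    by (metis mult_strict_left_mono)
  then show ?case by (simp add: mult_less_cancel_right)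
next
  case (Suc k)
  define p where "p = m - 1 - k"
  define q where "q = m + k"
  have "2 * m \<le> n" using twice_le_of_scaled_le[OF c mn] .
  then have p: "p \<ge> 1" "p - 1 < n" and q: "q < n"
    using Suc.prems unfolding p_def q_def by auto
  have IH: "a p < a q" using Suc unfolding p_def q_def by simp
  have rec_p: "a p * p * c = a (p - 1) * (n - (p - 1))" using rec[of "p - 1"] p by simp
  have rec_q: "a (Suc q) * Suc q * c = a q * (n - q)" using rec q by simp
  have pq_eqs: "real p = real m - real (Suc k)" "real (Suc q) = real m + real (Suc k)"
    "real (n - (p - 1)) = real n - real m + 1 + real (Suc k)"
    "real (n - q) = real n - real m + 1 - real (Suc k)"
    using Suc.prems q unfolding p_def q_def by (auto simp: of_nat_diff)
  have prod_le: "c\<^sup>2 * (real p * real (Suc q)) \<le> real (n - (p - 1)) * real (n - q)"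
    unfolding pq_eqs using Suc.prems by (intro mirrored_product_le[OF c mn]) auto
  have pos_pq: "a p > 0" "a (Suc q) > 0" "real (n - q) > 0" "real (n - (p - 1)) > 0"
    using pos p q by auto
  have "a (p - 1) * real (n - (p - 1)) * real (n - q) = a p * (real p * c * real (n - q))"
    by (simp only: rec_p[symmetric] mult_ac)
  also have "\<dots> < a q * (real p * c * real (n - q))"
    using IH p c pos_pq by (intro mult_strict_right_mono) auto
  also have "\<dots> = a (Suc q) * (c\<^sup>2 * (real p * real (Suc q)))"
    by (simp only: rec_q[symmetric] power2_eq_square mult_ac)
  also have "\<dots> \<le> a (Suc q) * (real (n - (p - 1)) * real (n - q))"
    using prod_le pos_pq by (intro mult_left_mono) auto
  finally have "a (p - 1) < a (Suc q)"
    using pos_pq by (simp add: mult.assoc mult_less_cancel_right)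
  moreover have "p - 1 = m - 1 - Suc k" "Suc q = m + Suc k" unfolding p_def q_def by auto
  ultimately show ?case by simp
qed

lemma lower_sum_less_upper_sum:
  fixes a :: "nat \<Rightarrow> real" and c :: real and m n :: nat
  assumes c: "c \<ge> 1" and pos: "\<And>j. j \<le> n \<Longrightarrow> a j > 0"
    and rec: "\<And>j. j < n \<Longrightarrow> a (Suc j) * Suc j * c = a j * (n - j)"
    and mn: "(c + 1) * m \<le> n"
  shows "sum a {..<m} < sum a {m..n}"
proof -
  have "2 * m \<le> n" using twice_le_of_scaled_le[OF c mn] .
  have "sum a {..<m} = (\<Sum>k<m. a (m - 1 - k))"
    using sum.nat_diff_reindex[of a m] by simp
  also have "\<dots> \<le> (\<Sum>k<m. a (m + k))"
    using mirrored_terms_less[OF c pos rec mn] by (intro sum_mono) (simp add: less_imp_le)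
  also have "\<dots> = sum a ((+) m ` {..<m})" by (simp add: sum.reindex)
  also have "\<dots> < sum a {m..n}"
  proof (rule sum_strict_mono2)
    show "n \<in> {m..n} - (+) m ` {..<m}" "0 < a n"
      using \<open>2 * m \<le> n\<close> pos by auto
  qed (use pos \<open>2 * m \<le> n\<close> in \<open>auto simp: less_imp_le\<close>)
  finally show ?thesis .
qed

lemma binomial_upper_tail:
  fixes c :: real and m n :: nat
  assumes c: "c \<ge> 1" and mn: "(c + 1) * m \<le> n"
  shows "(c + 1) ^ n < 2 * (\<Sum>j=m..n. (n choose j) * c ^ (n - j))"
proof -
  define a where "a j = (n choose j) * c ^ (n - j)" for j
  have rec: "a (Suc j) * Suc j * c = a j * (n - j)" if "j < n" for j
  proof -
    have "real (Suc j * (n choose Suc j)) = real ((n - j) * (n choose j))"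
      by (metis binomial_absorb_comp binomial_absorption)
    moreover have "c ^ (n - Suc j) * c = c ^ (n - j)"
      using that by (metis Suc_diff_Suc power_Suc2)
    ultimately show ?thesis
      unfolding a_def by (metis (no_types, lifting) mult.assoc mult.commute of_nat_mult)
  qed
  have "(c + 1) ^ n = sum a {..<m} + sum a {m..n}"
  proof -
    have "{..n} = {..<m} \<union> {m..n}" using twice_le_of_scaled_le[OF c mn] by auto
    then have "sum a {..n} = sum a {..<m} + sum a {m..n}"
      by (simp add: sum.union_disjoint ivl_disj_int)
    then show ?thesis
      unfolding a_def using binomial_ring[of 1 c n] by (simp add: add.commute)
  qed
  also have "\<dots> < 2 * sum a {m..n}"
    using lower_sum_less_upper_sum[OF c _ rec mn] c unfolding a_def by simp
  finally show ?thesis unfolding a_def .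
qed

lemma card_lists_count_list_eq:
  assumes "finite V" and "v \<in> V"
  shows "card {xs. set xs \<subseteq> V \<and> length xs = n \<and> count_list xs v = k}
    = (n choose k) * (card V - 1) ^ (n - k)"
proof (induction n arbitrary: k)
  case 0
  have "{xs. set xs \<subseteq> V \<and> length xs = 0 \<and> count_list xs v = k} = (if k = 0 then {[]} else {})"
    by auto
  then show ?case by simp
next
  case (Suc n)
  let ?L = "\<lambda>k. {xs. set xs \<subseteq> V \<and> length xs = n \<and> count_list xs v = k}"
  let ?cons = "\<lambda>(xs, x). x # xs"
  have fin: "finite (?L k)" for k
    using finite_lists_length_eq[OF assms(1), of n] by (rule finite_subset[rotated]) auto
  have card_cons: "card (?cons ` X) = card X" for X
    using inj_split_Cons by (rule card_image)
  have card_other: "card (V - {v}) = card V - 1"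
    using assms by simp
  show ?case
  proof (cases k)
    case 0
    have "{xs. set xs \<subseteq> V \<and> length xs = Suc n \<and> count_list xs v = k} = ?cons ` (?L 0 \<times> (V - {v}))"
      using 0 by (auto simp: length_Suc_conv image_iff split: if_splits)
    then show ?thesis
      using Suc.IH[of 0] 0 by (simp add: card_cons card_cartesian_product card_other)
  next
    case (Suc i)
    have "{xs. set xs \<subseteq> V \<and> length xs = Suc n \<and> count_list xs v = k}
        = ?cons ` (?L i \<times> {v} \<union> ?L (Suc i) \<times> (V - {v}))"
      using Suc assms(2) by (auto simp: length_Suc_conv split: if_splits)
    moreover have "card (?L i \<times> {v} \<union> ?L (Suc i) \<times> (V - {v}))
        = card (?L i) + card (?L (Suc i)) * (card V - 1)"
      using fin assms by (subst card_Un_disjoint) (auto simp: card_cartesian_product card_other)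
    moreover have "(n choose Suc i) * (card V - 1) ^ (n - Suc i) * (card V - 1)
        = (n choose Suc i) * (card V - 1) ^ (n - i)"
    proof (cases "i < n")
      case True
      then show ?thesis by (metis Suc_diff_Suc mult.assoc power_Suc2)
    qed simp
    ultimately show ?thesis
      using Suc.IH Suc by (simp add: card_cons algebra_simps)
  qed
qed

lemma card_lists_count_list_ge:
  assumes V: "finite V" "v \<in> V" "card V \<ge> 2" and t: "card V * t \<le> n"
  shows "card V ^ n < 2 * card {xs. set xs \<subseteq> V \<and> length xs = n \<and> t \<le> count_list xs v}"
proof -
  let ?L = "\<lambda>k. {xs. set xs \<subseteq> V \<and> length xs = n \<and> count_list xs v = k}"
  define c where "c = real (card V - 1)"
  have c: "c \<ge> 1" "c + 1 = card V" unfolding c_def using V(3) by auto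
  have fin: "finite (?L k)" for k
    using finite_lists_length_eq[OF V(1), of n] by (rule finite_subset[rotated]) auto
  have "{xs. set xs \<subseteq> V \<and> length xs = n \<and> t \<le> count_list xs v} = (\<Union>k\<in>{t..n}. ?L k)"
    using count_le_length by fastforce
  then have "card {xs. set xs \<subseteq> V \<and> length xs = n \<and> t \<le> count_list xs v}
      = card (\<Union>k\<in>{t..n}. ?L k)"
    by (rule arg_cong)
  also have "\<dots> = (\<Sum>k=t..n. card (?L k))"
    by (rule card_UN_disjoint) (use fin in auto)
  also have "\<dots> = (\<Sum>k=t..n. (n choose k) * (card V - 1) ^ (n - k))"
    by (simp add: card_lists_count_list_eq[OF V(1,2)])
  finally have "real (card {xs. set xs \<subseteq> V \<and> length xs = n \<and> t \<le> count_list xs v})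
      = (\<Sum>k=t..n. (n choose k) * c ^ (n - k))"
    by (simp add: c_def)
  moreover have "(c + 1) ^ n < 2 * (\<Sum>k=t..n. (n choose k) * c ^ (n - k))"
    using t c by (intro binomial_upper_tail) (auto simp flip: of_nat_mult)
  ultimately have "real (card V ^ n)
      < real (2 * card {xs. set xs \<subseteq> V \<and> length xs = n \<and> t \<le> count_list xs v})"
    unfolding c(2) by simp
  then show ?thesis by (simp only: of_nat_less_iff)
qed

lemma card_lists_fixed_le:
  assumes "finite V" and J: "J \<subseteq> {..<n}"
  shows "card {xs. set xs \<subseteq> V \<and> length xs = n \<and> (\<forall>i\<in>J. xs ! i = \<alpha> i)} \<le> card V ^ (n - card J)"
proof -
  define A where "A = {xs. set xs \<subseteq> V \<and> length xs = n \<and> (\<forall>i\<in>J. xs ! i = \<alpha> i)}"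
  define S where "S = {..<n} - J"
  have "inj_on (\<lambda>xs. restrict (nth xs) S) A"
  proof (rule inj_onI)
    fix xs ys assume "xs \<in> A" "ys \<in> A" and eq: "restrict (nth xs) S = restrict (nth ys) S"
    show "xs = ys"
    proof (rule nth_equalityI)
      show "length xs = length ys" using \<open>xs \<in> A\<close> \<open>ys \<in> A\<close> unfolding A_def by simp
      show "xs ! i = ys ! i" if "i < length xs" for i
        using that \<open>xs \<in> A\<close> \<open>ys \<in> A\<close> fun_cong[OF eq, of i] unfolding A_def S_def
        by (cases "i \<in> J") auto
    qed
  qed
  moreover have "(\<lambda>xs. restrict (nth xs) S) ` A \<subseteq> (\<Pi>\<^sub>E i\<in>S. V)"
    unfolding A_def S_def by (rule image_subsetI) (auto simp: restrict_PiE_iff Pi_iff)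
  moreover have "finite (\<Pi>\<^sub>E i\<in>S. V)"
    using assms(1) unfolding S_def by (simp add: finite_PiE)
  ultimately have "card A \<le> card (\<Pi>\<^sub>E i\<in>S. V)"
    by (rule card_inj_on_le)
  also have "\<dots> = card V ^ (n - card J)"
    using J unfolding S_def by (simp add: card_PiE card_Diff_subset finite_subset)
  finally show ?thesis unfolding A_def .
qed

lemma count_list_eq_card_indices: "count_list xs x = card {i. i < length xs \<and> xs ! i = x}"
  by (simp add: count_list_eq_length_filter length_filter_conv_card eq_commute)

lemma card_bool_lists_length: "card {v :: bool list. length v = b} = 2 ^ b"
  using card_lists_length_eq[of "UNIV :: bool set" b] by simp

lemma finite_bool_lists_length: "finite {v :: bool list. length v = b}"
  using finite_lists_length_eq[of "UNIV :: bool set" b] by simp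

lemma blocks_eq_lists: "blocks b N = {xs. set xs \<subseteq> {v. length v = b} \<and> length xs = N}"
  unfolding blocks_def by auto

lemma finite_blocks: "finite (blocks b N)"
  unfolding blocks_eq_lists by (rule finite_lists_length_eq[OF finite_bool_lists_length])

lemma card_blocks: "card (blocks b N) = 2 ^ (b * N)"
  unfolding blocks_eq_lists
  by (simp add: card_lists_length_eq[OF finite_bool_lists_length] card_bool_lists_length power_mult)

lemma IP_zero_right: "IP b x (replicate b False) = 0"
  unfolding IP_def by simp

lemma entropy_deficiency_nonneg:
  assumes "Y \<subseteq> blocks b N" and "Y \<noteq> {}"
  shows "entropy_deficiency b N Y \<ge> 0"
proof -
  have "card Y \<le> card (blocks b N)"
    using assms(1) finite_blocks by (rule card_mono[rotated])
  then have "real (card Y) \<le> 2 powr (real b * real N)"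
    by (simp add: card_blocks powr_realpow flip: of_nat_mult of_nat_le_iff)
  moreover have "card Y > 0"
    using assms finite_blocks by (simp add: card_gt_0_iff finite_subset)
  ultimately show ?thesis
    unfolding entropy_deficiency_def by (simp add: log_le_iff)
qed

lemma entropy_deficiency_less_one:
  assumes "2 ^ (b * N) < 2 * card Y"
  shows "entropy_deficiency b N Y < 1"
proof -
  have "(2::real) powr (real b * real N) = 2 ^ (b * N)"
    by (simp add: powr_realpow flip: of_nat_mult)
  moreover have "(2::real) ^ (b * N) < 2 * real (card Y)"
  proof -
    have "real (2 ^ (b * N)) < real (2 * card Y)"
      using assms by (simp only: of_nat_less_iff)
    then show ?thesis by simp
  qed
  ultimately have lt: "2 powr (real b * real N - 1) < real (card Y)"
    by (simp add: powr_diff)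
  moreover have "0 < real (card Y)"
    using lt powr_gt_zero[of 2 "real b * real N - 1"] by linarith
  ultimately have "real b * real N - 1 < log 2 (card Y)"
    by (simp add: less_log_iff)
  then show ?thesis
    unfolding entropy_deficiency_def by simp
qed

lemma prob_agree_le:
  assumes Y: "Y \<subseteq> blocks b N" "Y \<noteq> {}" and J: "J \<subseteq> {..<N}"
  shows "prob_agree Y J \<alpha> \<le> 2 powr (entropy_deficiency b N Y - real b * real (card J))"
proof -
  have "card {x \<in> Y. \<forall>i\<in>J. x ! i = \<alpha> i} \<le> card {x \<in> blocks b N. \<forall>i\<in>J. x ! i = \<alpha> i}"
    using Y(1) finite_blocks by (intro card_mono) auto
  also have "\<dots> \<le> card {v :: bool list. length v = b} ^ (N - card J)"
    unfolding blocks_eq_lists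
    using card_lists_fixed_le[OF finite_bool_lists_length J] by (simp add: conj_assoc)
  finally have count_le: "card {x \<in> Y. \<forall>i\<in>J. x ! i = \<alpha> i} \<le> 2 ^ (b * (N - card J))"
    by (simp add: card_bool_lists_length power_mult)
  have "real (card {x \<in> Y. \<forall>i\<in>J. x ! i = \<alpha> i}) \<le> 2 ^ (b * (N - card J))"
    using of_nat_mono[OF count_le, where 'a = real] by simp
  moreover have "2 powr (real b * (real N - real (card J))) = 2 powr real (b * (N - card J))"
    using card_mono[OF _ J] by (simp add: of_nat_diff)
  moreover have "\<dots> = 2 ^ (b * (N - card J))"
    by (rule powr_realpow) simp
  ultimately have "real (card {x \<in> Y. \<forall>i\<in>J. x ! i = \<alpha> i}) \<le> 2 powr (real b * (real N - real (card J)))"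
    by linarith
  moreover have "card Y > 0"
    using Y finite_blocks by (simp add: card_gt_0_iff finite_subset)
  ultimately have "prob_agree Y J \<alpha> \<le> 2 powr (real b * (real N - real (card J))) / card Y"
    unfolding prob_agree_def by (simp add: divide_right_mono)
  also have "\<dots> = 2 powr (real b * (real N - real (card J)) - log 2 (card Y))"
    using \<open>card Y > 0\<close> by (simp add: powr_diff)
  finally show ?thesis
    unfolding entropy_deficiency_def by (simp add: algebra_simps)
qed

lemma le_min_entropy_rate:
  assumes Y: "finite Y" "Y \<noteq> {}" and "N \<ge> 1" and "b \<ge> 1"
    and \<tau>: "\<forall>J \<subseteq> {..<N}. \<forall>\<alpha>. prob_agree Y J \<alpha> \<le> (2 ^ b) powr (- \<tau> * real (card J))"
  shows "\<tau> \<le> min_entropy_rate b N Y"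
  unfolding min_entropy_rate_def
proof (rule cSup_upper)
  show "\<tau> \<in> {\<tau>. \<forall>J \<subseteq> {..<N}. \<forall>\<alpha>. prob_agree Y J \<alpha> \<le> (2 ^ b) powr (- \<tau> * real (card J))}"
    using \<tau> by simp
  obtain y where "y \<in> Y" using Y(2) by blast
  have "card Y > 0" using Y by (simp add: card_gt_0_iff)
  have base: "(1::real) < 2 ^ b" using \<open>b \<ge> 1\<close> by simp
  show "bdd_above {\<tau>. \<forall>J \<subseteq> {..<N}. \<forall>\<alpha>. prob_agree Y J \<alpha> \<le> (2 ^ b) powr (- \<tau> * real (card J))}"
  proof (rule bdd_aboveI)
    fix \<sigma> assume "\<sigma> \<in> {\<tau>. \<forall>J \<subseteq> {..<N}. \<forall>\<alpha>. prob_agree Y J \<alpha> \<le> (2 ^ b) powr (- \<tau> * real (card J))}"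
    moreover have "{0} \<subseteq> {..<N}" using \<open>N \<ge> 1\<close> by auto
    ultimately have "prob_agree Y {0} (\<lambda>_. y ! 0) \<le> (2 ^ b) powr (- \<sigma> * real (card {0::nat}))"
      by blast
    moreover have "1 \<le> card {x \<in> Y. x ! 0 = y ! 0}"
      using \<open>y \<in> Y\<close> Y(1) by (auto simp: Suc_le_eq card_gt_0_iff)
    then have "1 / card Y \<le> prob_agree Y {0} (\<lambda>_. y ! 0)"
      unfolding prob_agree_def by (simp add: divide_right_mono)
    ultimately have "1 / card Y \<le> 1 / (2 ^ b) powr \<sigma>"
      by (simp add: powr_minus_divide)
    then have "(2 ^ b) powr \<sigma> \<le> card Y"
      using \<open>card Y > 0\<close> by (simp add: field_simps)
    then show "\<sigma> \<le> log (2 ^ b) (card Y)"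
      using base \<open>card Y > 0\<close> by (simp add: le_log_iff)
  qed
qed

lemma min_entropy_rate_ge_deficiency:
  assumes Y: "Y \<subseteq> blocks b N" "Y \<noteq> {}" and "N \<ge> 1" and "b \<ge> 1"
  shows "1 - entropy_deficiency b N Y / b \<le> min_entropy_rate b N Y"
proof (rule le_min_entropy_rate)
  show "finite Y" using Y(1) finite_blocks by (rule finite_subset)
  let ?d = "entropy_deficiency b N Y"
  show "\<forall>J \<subseteq> {..<N}. \<forall>\<alpha>. prob_agree Y J \<alpha> \<le> (2 ^ b) powr (- (1 - ?d / b) * real (card J))"
  proof (intro allI impI)
    fix J \<alpha> assume J: "J \<subseteq> {..<N}"
    show "prob_agree Y J \<alpha> \<le> (2 ^ b) powr (- (1 - ?d / b) * real (card J))"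
    proof (cases "J = {}")
      case True
      then show ?thesis
        using \<open>finite Y\<close> Y(2) by (simp add: prob_agree_def)
    next
      case False
      then have "1 \<le> card J"
        using J by (metis One_nat_def Suc_leI card_gt_0_iff finite_lessThan finite_subset)
      then have "?d \<le> real (card J) * ?d"
        using entropy_deficiency_nonneg[OF Y] by (simp add: mult_le_cancel_right1)
      then have "?d - real b * real (card J) \<le> real b * (- (1 - ?d / b) * real (card J))"
        using \<open>b \<ge> 1\<close> by (simp add: algebra_simps)
      then have "2 powr (?d - real b * real (card J)) \<le> (2 ^ b) powr (- (1 - ?d / b) * real (card J))"
        by (simp add: powr_powr flip: powr_realpow)
      then show ?thesis
        using prob_agree_le[OF Y J] by (rule order_trans[rotated])
    qed
  qed
qed (use assms in auto)

lemma min_entropy_rate_gt_of_deficiency_lt_one: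
  assumes "Y \<subseteq> blocks b N" "Y \<noteq> {}" "N \<ge> 1" "b \<ge> 1" and "entropy_deficiency b N Y < 1"
  shows "min_entropy_rate b N Y > 1 - 1 / real b"
proof -
  have "1 - 1 / real b < 1 - entropy_deficiency b N Y / b"
    using assms(4,5) by (simp add: divide_strict_right_mono)
  also have "\<dots> \<le> min_entropy_rate b N Y"
    using assms(1-4) by (rule min_entropy_rate_ge_deficiency)
  finally show ?thesis .
qed

lemma all_ones_notin_IP_set:
  assumes Y: "Y \<subseteq> blocks b N" and zeros: "\<forall>y\<in>Y. t \<le> count_list y (replicate b False)"
    and I: "finite I" "card I < t"
  shows "restrict (\<lambda>_. 1) ({..<N} - I) \<notin> IP_set b ({..<N} - I) X Y"
proof
  assume "restrict (\<lambda>_. 1) ({..<N} - I) \<in> IP_set b ({..<N} - I) X Y"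
  then obtain x y where "y \<in> Y"
    and eq: "restrict (\<lambda>_. 1) ({..<N} - I) = restrict (\<lambda>i. IP b (x ! i) (y ! i)) ({..<N} - I)"
    unfolding IP_set_def by auto
  define Z where "Z = {i. i < length y \<and> y ! i = replicate b False}"
  have "card I < card Z"
    using zeros \<open>y \<in> Y\<close> I(2) unfolding Z_def count_list_eq_card_indices by fastforce
  then obtain i where "i \<in> Z" "i \<notin> I"
    using card_mono[OF I(1)] by (meson not_le subsetI)
  moreover have "length y = N" using \<open>y \<in> Y\<close> Y unfolding blocks_def by auto
  ultimately have "1 = IP b (x ! i) (y ! i)" and "y ! i = replicate b False"
    using fun_cong[OF eq, of i] unfolding Z_def by auto
  then show False by (simp add: IP_zero_right)
qed

lemma two_pow_mult_le_of_le_log: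
  fixes x :: real
  assumes "x > 0" and "N \<ge> 1" and "real b \<le> log 2 (real N / x)"
  shows "2 ^ b * x \<le> N"
  using assms by (simp add: le_log_iff powr_realpow pos_le_divide_eq mult.commute)

theorem theorem4:
  fixes N b :: nat and \<Delta> K :: real
  assumes "N \<ge> 1" and "b \<ge> 1" and "\<Delta> \<ge> 1" and "K \<ge> 1"
    and "real b \<le> log 2 (real N / (K * \<Delta>))"
  shows "\<exists>Y. Y \<subseteq> blocks b N \<and> Y \<noteq> {}
    \<and> entropy_deficiency b N Y \<le> \<Delta>
    \<and> min_entropy_rate b N Y > 1 - 1 / real b
    \<and> (\<forall>I \<subseteq> {..<N}. real (card I) \<le> (K - 1) * \<Delta> \<longrightarrow>
          restrict (\<lambda>_. 1) ({..<N} - I) \<notin> IP_set b ({..<N} - I) (blocks b N) Y)"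
proof -
  define t where "t = nat \<lfloor>(K - 1) * \<Delta>\<rfloor> + 1"
  define Y where "Y = {y \<in> blocks b N. t \<le> count_list y (replicate b False)}"
  have "Y \<subseteq> blocks b N"
    unfolding Y_def by blast
  have t: "(K - 1) * \<Delta> < t" "real t \<le> K * \<Delta>"
    using assms(3,4) unfolding t_def by (auto simp: algebra_simps) linarith+
  have "real (2 ^ b * t) \<le> 2 ^ b * (K * \<Delta>)"
    using t(2) by simp
  also have "\<dots> \<le> N"
    using assms by (intro two_pow_mult_le_of_le_log) auto
  finally have "2 ^ b * t \<le> N"
    by (simp only: of_nat_le_iff)
  then have "2 ^ (b * N) < 2 * card Y"
    using card_lists_count_list_ge[of "{v. length v = b}" "replicate b False" t N] assms(2)
    unfolding Y_def blocks_eq_lists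
    by (simp add: finite_bool_lists_length card_bool_lists_length power_mult
        Suc_le_eq[symmetric] self_le_power[of 2])
  then have "Y \<noteq> {}" and deficiency: "entropy_deficiency b N Y < 1"
    using entropy_deficiency_less_one by auto
  moreover have "min_entropy_rate b N Y > 1 - 1 / real b"
    using \<open>Y \<subseteq> blocks b N\<close> \<open>Y \<noteq> {}\<close> assms(1,2) deficiency
    by (rule min_entropy_rate_gt_of_deficiency_lt_one)
  moreover have "restrict (\<lambda>_. 1) ({..<N} - I) \<notin> IP_set b ({..<N} - I) (blocks b N) Y"
    if "I \<subseteq> {..<N}" and "real (card I) \<le> (K - 1) * \<Delta>" for I
    using \<open>Y \<subseteq> blocks b N\<close> that t(1) finite_subset[OF that(1)] unfolding Y_def
    by (intro all_ones_notin_IP_set) auto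
  ultimately show ?thesis
    using \<open>Y \<subseteq> blocks b N\<close> assms(3) by (intro exI[of _ Y]) auto
qed

end
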